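(* Let $G$ be a finite group and $p$ a prime dividing $|G|$ such that $G$ has a normal cyclic Sylow $p$-subgroup $P$, and let $H$ be the unique subgroup of $P$ of order $p$. If $x\in G$ is such that the coset $Hx$ is not contained in the conjugacy class $x^G$ of $x$, then $x\in C_G(P)$.
   Context: $x^G=\{g^{-1}xg: g\in G\}$ is the conjugacy class of $x$, and $C_G(P)$ is the centralizer of $P$ in $G$. *)

theory Defs
  imports "HOL-Algebra.Algebra"
begin

definition conj_class :: "('a, 'b) monoid_scheme \<Rightarrow> 'a \<Rightarrow> 'a set" where
  "conj_class G x = {inv\<^bsub>G\<^esub> g \<otimes>\<^bsub>G\<^esub> x \<otimes>\<^bsub>G\<^esub> g | g. g \<in> carrier G}"

definition centralizer_of :: "('a, 'b) monoid_scheme \<Rightarrow> 'a set \<Rightarrow> 'a set" where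
  "centralizer_of G P = {g \<in> carrier G. \<forall>y \<in> P. g \<otimes>\<^bsub>G\<^esub> y = y \<otimes>\<^bsub>G\<^esub> g}"

definition sylow_subgroup :: "('a, 'b) monoid_scheme \<Rightarrow> nat \<Rightarrow> 'a set \<Rightarrow> bool" where
  "sylow_subgroup G p P \<longleftrightarrow> subgroup P G \<and> card P = p ^ Factorial_Ring.multiplicity p (order G)"

end

theory Submission
  imports Defs
begin

text \<open>
  Write \<open>P = \<langle>a\<rangle>\<close> with \<open>|P| = p^m\<close>; since \<open>P\<close> is normal, \<open>x\<^sup>-\<^sup>1 a x = a^r\<close> for some \<open>r\<close>, and \<open>x\<close>
  centralizes \<open>P\<close> iff \<open>a^r = a\<close>. Otherwise \<open>p^m\<close> does not divide \<open>1 - r\<close>. An element \<open>h = a^i\<close>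
  of \<open>H\<close> satisfies \<open>h x = x a^(ri)\<close> with \<open>p^m | ri\<cdot>p\<close>, while conjugating \<open>x\<close> by \<open>a^k\<close> gives
  \<open>x a^(k(1-r))\<close>. The congruence \<open>k(1-r) \<equiv> ri (mod p^m)\<close> is solvable because
  \<open>gcd(1-r, p^m)\<close> divides \<open>p^(m-1)\<close>, which divides \<open>ri\<close>; so all of \<open>Hx\<close> lies in \<open>x^G\<close>.
\<close>

lemma linear_congruence_prime_power_solvable:
  fixes p m :: nat and d j :: int
  assumes "Factorial_Ring.prime p" and "\<not> int p ^ m dvd d" and "int p ^ m dvd j * int p"
  shows "\<exists>k. int p ^ m dvd k * d - j"
proof -
  have prime_p: "Factorial_Ring.prime (int p)" using assms(1) by simp
  define g where "g = gcd d (int p ^ m)"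
  obtain i where "i \<le> m" and g_eq: "g = int p ^ i"
    using divides_primepow[OF prime_p, of g m] by (auto simp: g_def)
  have "i \<noteq> m" using g_eq assms(2) unfolding g_def by (metis gcd_dvd1)
  then have "g dvd int p ^ (m - 1)" using g_eq \<open>i \<le> m\<close> by (simp add: le_imp_power_dvd)
  moreover have "int p ^ (m - 1) dvd j"
  proof -
    have "m \<noteq> 0" using assms(2) by (metis power_0 one_dvd)
    then have "int p ^ (m - 1) * int p dvd j * int p"
      using assms(3) by (metis power_minus_mult zero_less_iff_neq_zero)
    then show ?thesis using assms(1) by (simp add: prime_gt_0_nat)
  qed
  ultimately have "g dvd j" by (rule dvd_trans)
  then obtain t where t: "j = g * t" ..
  obtain u v where uv: "u * d + v * int p ^ m = g" using bezout_int g_def by metis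
  have "(u * t) * d - j = - (t * v) * int p ^ m" unfolding t uv[symmetric] by (simp add: algebra_simps)
  then show ?thesis by (metis dvd_triv_right)
qed

context group
begin

lemma conj_class_memI: "g \<in> carrier G \<Longrightarrow> inv g \<otimes> x \<otimes> g \<in> conj_class G x"
  unfolding conj_class_def by blast

lemma subgroup_pow_card_eq_one:
  assumes "subgroup H G" and "h \<in> H"
  shows "h [^] card H = \<one>"
proof -
  interpret H: group "subgroup_generated G H" by (rule group_subgroup_generated)
  have carrier_H: "carrier (subgroup_generated G H) = H"
    using subgroup.carrier_subgroup_generated_subgroup[OF assms(1)] .
  have "h [^]\<^bsub>subgroup_generated G H\<^esub> order (subgroup_generated G H) = \<one>\<^bsub>subgroup_generated G H\<^esub>"
    using H.pow_order_eq_1 assms(2) carrier_H by simp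
  then show ?thesis
    using carrier_H by (simp add: order_def pow_subgroup_generated one_subgroup_generated)
qed

lemma cyclic_subgroup_generator:
  assumes "subgroup P G" and "cyclic_group (subgroup_generated G P)"
  obtains a where "a \<in> P" and "P = range (\<lambda>n::int. a [^] n)"
proof -
  interpret S: group "subgroup_generated G P" by (rule group_subgroup_generated)
  have carrier_S: "carrier (subgroup_generated G P) = P"
    using subgroup.carrier_subgroup_generated_subgroup[OF assms(1)] .
  obtain a where a: "a \<in> P" and "P = range (\<lambda>n::int. a [^]\<^bsub>subgroup_generated G P\<^esub> n)"
    using assms(2) S.cyclic_group carrier_S by auto
  moreover have "a [^]\<^bsub>subgroup_generated G P\<^esub> n = a [^] n" for n :: int
    using int_pow_subgroup_generated a carrier_S by simp
  ultimately show ?thesis using that by simp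
qed

lemma int_pow_conj:
  assumes "x \<in> carrier G" and "a \<in> carrier G"
  shows "inv x \<otimes> a [^] (k::int) \<otimes> x = (inv x \<otimes> a \<otimes> x) [^] k"
proof -
  have "(\<lambda>g. inv x \<otimes> g \<otimes> x) \<in> hom G G"
    unfolding hom_def using assms(1) by (auto simp: m_assoc) (simp add: m_assoc[symmetric])
  from hom_int_pow[OF this assms(2) is_group is_group] show ?thesis .
qed

lemma conj_by_int_pow:
  assumes "x \<in> carrier G" and "a \<in> carrier G" and "inv x \<otimes> a \<otimes> x = a [^] (r::int)"
  shows "inv (a [^] (k::int)) \<otimes> x \<otimes> a [^] k = x \<otimes> a [^] (k * (1 - r))"
proof -
  have "inv (a [^] k) \<otimes> x \<otimes> a [^] k = x \<otimes> (inv x \<otimes> a [^] (- k) \<otimes> x) \<otimes> a [^] k"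
    using assms(1,2) by (simp add: int_pow_neg m_assoc[symmetric])
  also have "inv x \<otimes> a [^] (- k) \<otimes> x = a [^] (r * - k)"
    using int_pow_conj[OF assms(1,2)] assms(2,3) int_pow_pow by simp
  also have "x \<otimes> a [^] (r * - k) \<otimes> a [^] k = x \<otimes> a [^] (r * - k + k)"
    using assms(1,2) int_pow_mult[OF assms(2), of "r * - k" k] by (simp add: m_assoc)
  also have "r * - k + k = k * (1 - r)"
    by (simp add: algebra_simps)
  finally show ?thesis .
qed

lemma centralizer_of_int_powers:
  assumes "x \<in> carrier G" and "a \<in> carrier G" and "inv x \<otimes> a \<otimes> x = a"
  shows "x \<in> centralizer_of G (range (\<lambda>n::int. a [^] n))"
proof -
  have "x \<otimes> a [^] k = a [^] k \<otimes> x" for k :: int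
  proof -
    have "inv x \<otimes> a [^] k \<otimes> x = a [^] k"
      using int_pow_conj[OF assms(1,2)] assms(3) by simp
    then show ?thesis
      using assms(1,2) by (metis inv_closed int_pow_closed m_assoc m_closed r_inv l_one)
  qed
  then show ?thesis using assms(1) unfolding centralizer_of_def by auto
qed

lemma int_pow_mult_mem_conj_class:
  assumes "x \<in> carrier G" and "a \<in> carrier G"
    and "inv x \<otimes> a \<otimes> x = a [^] (r::int)" and "a [^] r \<noteq> a"
    and "Factorial_Ring.prime p" and "ord a = p ^ m"
    and "(a [^] (i::int)) [^] p = \<one>"
  shows "a [^] i \<otimes> x \<in> conj_class G x"
proof -
  have "\<not> int p ^ m dvd 1 - r"
    using int_pow_eq[OF assms(2), of r 1] assms(2,4,6) by simp
  moreover have "int p ^ m dvd (r * i) * int p"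
  proof -
    have "a [^] (i * int p) = \<one>"
      using assms(2,7) by (simp add: int_pow_pow flip: int_pow_int)
    then show ?thesis
      using int_pow_eq_id[OF assms(2)] assms(6) by (simp add: mult.assoc)
  qed
  ultimately obtain k where k: "int p ^ m dvd k * (1 - r) - r * i"
    using linear_congruence_prime_power_solvable[OF assms(5)] by blast
  have "a [^] i \<otimes> x = x \<otimes> (inv x \<otimes> a [^] i \<otimes> x)"
    using assms(1,2) by (simp add: m_assoc[symmetric])
  also have "inv x \<otimes> a [^] i \<otimes> x = a [^] (r * i)"
    using int_pow_conj[OF assms(1,2)] assms(2,3) int_pow_pow by simp
  also have "a [^] (r * i) = a [^] (k * (1 - r))"
    using int_pow_eq[OF assms(2)] k assms(6) by (metis dvd_minus_iff minus_diff_eq of_nat_power)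
  also have "x \<otimes> a [^] (k * (1 - r)) = inv (a [^] k) \<otimes> x \<otimes> a [^] k"
    using conj_by_int_pow[OF assms(1-3)] by simp
  finally show ?thesis using conj_class_memI assms(2) by simp
qed

end

theorem lemma4p1:
  fixes G (structure) and p :: nat and P H :: "'a set" and x :: 'a
  assumes "group G" and "finite (carrier G)"
    and "Factorial_Ring.prime p" and "p dvd order G"
    and "sylow_subgroup G p P" and "P \<lhd> G"
    and "cyclic_group (subgroup_generated G P)"
    and "subgroup H G" and "H \<subseteq> P" and "card H = p"
    and "x \<in> carrier G"
    and "\<not> (H #> x \<subseteq> conj_class G x)"
  shows "x \<in> centralizer_of G P"
proof -
  interpret group G by fact
  interpret P: normal P G by fact
  obtain a where "a \<in> P" and P_eq: "P = range (\<lambda>n::int. a [^] n)"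
    using cyclic_subgroup_generator[OF P.subgroup_axioms assms(7)] .
  then have a: "a \<in> carrier G" using P.subset by blast
  have "generate G {a} = P" using generate_pow[OF a] P_eq by auto
  then have "ord a = p ^ multiplicity p (order G)"
    using assms(5) generate_pow_card[OF a] unfolding sylow_subgroup_def by simp
  obtain r :: int where r: "inv x \<otimes> a \<otimes> x = a [^] r"
    using P.inv_op_closed1[OF assms(11) \<open>a \<in> P\<close>] P_eq by blast
  show ?thesis
  proof (cases "a [^] r = a")
    case True
    then show ?thesis using centralizer_of_int_powers[OF assms(11) a] r P_eq by simp
  next
    case False
    have "H #> x \<subseteq> conj_class G x"
    proof
      fix z assume "z \<in> H #> x"
      then obtain h where "h \<in> H" and z: "z = h \<otimes> x" unfolding r_coset_def by blast
      then obtain i where h: "h = a [^] (i::int)" using assms(9) P_eq by auto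
      have "h [^] p = \<one>" using subgroup_pow_card_eq_one[OF assms(8) \<open>h \<in> H\<close>] assms(10) by simp
      then show "z \<in> conj_class G x"
        using int_pow_mult_mem_conj_class[OF assms(11) a r False assms(3) \<open>ord a = _\<close>] h z by simp
    qed
    with assms(12) show ?thesis by contradiction
  qed
qed

end
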